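(* Let $\sigma:\mathbb{R}\to\mathbb{R}$ be a continuous discriminatory function. Let $n\ge1$ and let $\mathbf{A},\mathbf{B}\in\mathbb{R}^{n\times n}$ be non-singular diagonalizable matrices such that (i) $\mathbf{A}^q=a\mathbf{I}$ for some positive integer $q\le n$ and some scalar $a\neq0$; (ii) $\mathbf{I}-a\mathbf{B}^q$ is nonsingular; (iii) the eigenvalues of $\mathbf{B}$ have pairwise distinct absolute values. Then for every continuous function $f:[0,1]^n\to\mathbb{R}$ and every $\epsilon>0$ there exist a positive integer $k$, a matrix $\mathbf{W}=[\mathbf{w}_1|\cdots|\mathbf{w}_{kn}]=[\mathbf{W}_1|\mathbf{W}_2|\cdots|\mathbf{W}_k]\in\mathbb{R}^{n\times kn}$ whose $n\times n$ blocks $\mathbf{W}_i$ each satisfy $\mathbf{W}_i-\mathbf{A}\mathbf{W}_i\mathbf{B}=\mathbf{g}_i\mathbf{h}_i^T$ for some $\mathbf{g}_i,\mathbf{h}_i\in\mathbb{R}^n$ (i.e. have Stein displacement rank at most $1$), and real numbers $\alpha_1,\dots,\alpha_{kn},\theta_1,\dots,\theta_{kn}$ such that the function $$G(\mathbf{x})=\sum_{j=1}^{kn}\alpha_j\,\sigma(\mathbf{w}_j^T\mathbf{x}+\theta_j)$$ satisfies $\max_{\mathbf{x}\in[0,1]^n}|G(\mathbf{x})-f(\mathbf{x})|<\epsilon$.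
   Context: A function $\sigma:\mathbb{R}\to\mathbb{R}$ is called discriminatory if the zero measure is the only finite signed regular Borel measure $\mu$ on $[0,1]^n$ such that $\int_{[0,1]^n}\sigma(\mathbf{w}^T\mathbf{x}+\theta)\,d\mu(\mathbf{x})=0$ for all $\mathbf{w}\in\mathbb{R}^n$ and $\theta\in\mathbb{R}$. $\mathbf{w}_j$ denotes the $j$-th column of $\mathbf{W}$. *)

theory Defs
  imports "HOL-Analysis.Analysis"
begin

definition unit_cube :: "(real^'n) set" where
  "unit_cube = {x. \<forall>i. 0 \<le> x$i \<and> x$i \<le> 1}"

text \<open>A finite signed (regular) Borel measure on the cube is represented by its
  Jordan decomposition mu = M1 - M2 into two finite Borel measures on the cube
  (on the compact metric space [0,1]^n every finite Borel measure is regular).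
  mu is the zero measure iff M1 and M2 agree on every Borel set.\<close>
definition discriminatory :: "(real \<Rightarrow> real) \<Rightarrow> 'n::finite itself \<Rightarrow> bool" where
  "discriminatory \<sigma> (_::'n itself) \<longleftrightarrow>
     (\<forall>M1 M2 :: (real^'n) measure.
        finite_measure M1 \<and> finite_measure M2 \<and>
        sets M1 = sets (restrict_space borel (unit_cube :: (real^'n) set)) \<and>
        sets M2 = sets (restrict_space borel (unit_cube :: (real^'n) set)) \<and>
        (\<forall>w \<theta>. (\<integral>x. \<sigma> (w \<bullet> x + \<theta>) \<partial>M1) = (\<integral>x. \<sigma> (w \<bullet> x + \<theta>) \<partial>M2))
        \<longrightarrow> (\<forall>S \<in> sets M1. measure M1 S = measure M2 S))"

primrec mat_pow :: "'a::semiring_1^'n^'n \<Rightarrow> nat \<Rightarrow> 'a^'n^'n" where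
  "mat_pow A 0 = mat 1"
| "mat_pow A (Suc k) = A ** mat_pow A k"

definition cmat :: "real^'n^'m \<Rightarrow> complex^'n^'m" where
  "cmat A = (\<chi> i j. complex_of_real (A$i$j))"

definition diagonalizable :: "real^'n^'n \<Rightarrow> bool" where
  "diagonalizable A \<longleftrightarrow> (\<exists>(P::complex^'n^'n) (D::complex^'n^'n).
      invertible P \<and> (\<forall>i j. i \<noteq> j \<longrightarrow> D$i$j = 0) \<and> cmat A = P ** D ** matrix_inv P)"

definition eigenvalues :: "real^'n^'n \<Rightarrow> complex set" where
  "eigenvalues A = {e. \<exists>v::complex^'n. v \<noteq> 0 \<and> cmat A *v v = e *s v}"

text \<open>The n eigenvalues (counted with multiplicity) have pairwise distinct absolute
  values: there are n distinct eigenvalues and cmod is injective on them.\<close>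
definition distinct_abs_eigenvalues :: "real^'n^'n \<Rightarrow> bool" where
  "distinct_abs_eigenvalues A \<longleftrightarrow>
     card (eigenvalues A) = CARD('n) \<and> inj_on cmod (eigenvalues A)"

definition outer :: "real^'n \<Rightarrow> real^'n \<Rightarrow> real^'n^'n" where
  "outer g h = (\<chi> r c. g$r * h$c)"

end

theory Submission
  imports Defs
begin

text \<open>If every k-th forward difference of every reparametrisation \<open>\<sigma>(r x + c)\<close> vanished
  identically, signed point masses on the diagonal of the cube would be annihilated by all
  neurons, contradicting discrimination. A nonvanishing k-th difference yields \<open>t\<^sup>k\<close> as a uniform
  limit of one-dimensional networks: averaging over shifts of the bias and then differentiating
  in the weight turn approximations of \<open>t\<^sup>j g(w t + \<theta>)\<close> into approximations of
  \<open>t\<^sup>j\<^sup>+\<^sup>1 (g(w t + \<theta> + 1) - g(w t + \<theta>))\<close>. Weierstrass then gives all continuous functions on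
  intervals, and the ridge functions \<open>exp (v \<bullet> x)\<close> together with Stone-Weierstrass give all
  continuous functions on the cube. Finally every neuron weight is a column of a block
  \<open>W = z h\<^sup>T\<close>, where \<open>h\<close> is a real left eigenvector of \<open>B\<close> (distinct moduli force a real
  eigenvalue): then \<open>W - A W B = (z - \<mu> A z) h\<^sup>T\<close> has displacement rank one.\<close>

definition sigma_net :: "(real \<Rightarrow> real) \<Rightarrow> (real \<times> 'a \<times> real) list \<Rightarrow> 'a::real_inner \<Rightarrow> real" where
  "sigma_net \<sigma> L x = (\<Sum>(\<beta>, w, \<theta>)\<leftarrow>L. \<beta> * \<sigma> (w \<bullet> x + \<theta>))"

definition net_approximable :: "(real \<Rightarrow> real) \<Rightarrow> 'a::real_inner set \<Rightarrow> ('a \<Rightarrow> real) \<Rightarrow> bool" where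
  "net_approximable \<sigma> S F \<longleftrightarrow> (\<forall>\<epsilon>>0. \<exists>L. \<forall>x\<in>S. \<bar>sigma_net \<sigma> L x - F x\<bar> < \<epsilon>)"

lemma sigma_net_Nil [simp]: "sigma_net \<sigma> [] x = 0"
  by (simp add: sigma_net_def)

lemma sigma_net_append [simp]: "sigma_net \<sigma> (L1 @ L2) x = sigma_net \<sigma> L1 x + sigma_net \<sigma> L2 x"
  by (simp add: sigma_net_def)

lemma sigma_net_scale:
  "sigma_net \<sigma> (map (\<lambda>(\<beta>, w, \<theta>). (c * \<beta>, w, \<theta>)) L) x = c * sigma_net \<sigma> L x"
  by (induction L) (auto simp: sigma_net_def algebra_simps)

lemma sigma_net_ridge:
  "sigma_net \<sigma> (map (\<lambda>(\<beta>, w, \<theta>). (\<beta>, w *\<^sub>R v, \<theta>)) L) x = sigma_net \<sigma> L (v \<bullet> x)"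
  by (induction L) (auto simp: sigma_net_def)

lemma net_approximable_neuron: "net_approximable \<sigma> S (\<lambda>x. c * \<sigma> (w \<bullet> x + \<theta>))"
  unfolding net_approximable_def by (auto intro!: exI[of _ "[(c, w, \<theta>)]"] simp: sigma_net_def)

lemma net_approximable_zero: "net_approximable \<sigma> S (\<lambda>x. 0)"
  unfolding net_approximable_def by (auto intro!: exI[of _ "[]"])

lemma net_approximable_add:
  assumes "net_approximable \<sigma> S F" "net_approximable \<sigma> S G"
  shows "net_approximable \<sigma> S (\<lambda>x. F x + G x)"
  unfolding net_approximable_def
proof (intro allI impI)
  fix \<epsilon> :: real assume "\<epsilon> > 0"
  then obtain L1 L2 where L1: "\<forall>x\<in>S. \<bar>sigma_net \<sigma> L1 x - F x\<bar> < \<epsilon>/2"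
    and L2: "\<forall>x\<in>S. \<bar>sigma_net \<sigma> L2 x - G x\<bar> < \<epsilon>/2"
    using assms half_gt_zero unfolding net_approximable_def by blast
  have "\<bar>sigma_net \<sigma> (L1 @ L2) x - (F x + G x)\<bar> < \<epsilon>" if "x \<in> S" for x
  proof -
    have "\<bar>sigma_net \<sigma> (L1 @ L2) x - (F x + G x)\<bar> \<le> \<bar>sigma_net \<sigma> L1 x - F x\<bar> + \<bar>sigma_net \<sigma> L2 x - G x\<bar>"
      using abs_triangle_ineq[of "sigma_net \<sigma> L1 x - F x" "sigma_net \<sigma> L2 x - G x"] by simp
    also have "\<dots> < \<epsilon>"
      using add_strict_mono[OF L1[rule_format, OF that] L2[rule_format, OF that]] by simp
    finally show ?thesis .
  qed
  then show "\<exists>L. \<forall>x\<in>S. \<bar>sigma_net \<sigma> L x - (F x + G x)\<bar> < \<epsilon>"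
    by blast
qed

lemma net_approximable_cmult:
  assumes "net_approximable \<sigma> S F"
  shows "net_approximable \<sigma> S (\<lambda>x. c * F x)"
  unfolding net_approximable_def
proof (intro allI impI)
  fix \<epsilon> :: real assume "\<epsilon> > 0"
  then have "\<epsilon> / (\<bar>c\<bar> + 1) > 0"
    by (simp add: add_nonneg_pos)
  then obtain L where L: "\<forall>x\<in>S. \<bar>sigma_net \<sigma> L x - F x\<bar> < \<epsilon> / (\<bar>c\<bar> + 1)"
    using assms unfolding net_approximable_def by blast
  have "\<bar>sigma_net \<sigma> (map (\<lambda>(\<beta>, w, \<theta>). (c * \<beta>, w, \<theta>)) L) x - c * F x\<bar> < \<epsilon>" if "x \<in> S" for x
  proof -
    have "\<bar>sigma_net \<sigma> (map (\<lambda>(\<beta>, w, \<theta>). (c * \<beta>, w, \<theta>)) L) x - c * F x\<bar> = \<bar>c\<bar> * \<bar>sigma_net \<sigma> L x - F x\<bar>"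
      by (simp only: sigma_net_scale flip: right_diff_distrib abs_mult)
    also have "\<dots> \<le> \<bar>c\<bar> * (\<epsilon> / (\<bar>c\<bar> + 1))"
      using L that by (intro mult_left_mono) auto
    also have "\<dots> < \<epsilon>"
      using \<open>\<epsilon> > 0\<close> by (simp add: field_simps)
    finally show ?thesis .
  qed
  then show "\<exists>L. \<forall>x\<in>S. \<bar>sigma_net \<sigma> L x - c * F x\<bar> < \<epsilon>"
    by blast
qed

lemma net_approximable_diff:
  assumes "net_approximable \<sigma> S F" "net_approximable \<sigma> S G"
  shows "net_approximable \<sigma> S (\<lambda>x. F x - G x)"
  using net_approximable_add[OF assms(1) net_approximable_cmult[OF assms(2), of "-1"]] by simp

lemma net_approximable_sum:
  assumes "\<And>i. i \<in> I \<Longrightarrow> net_approximable \<sigma> S (F i)"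
  shows "net_approximable \<sigma> S (\<lambda>x. \<Sum>i\<in>I. F i x)"
  using assms
  by (induction I rule: infinite_finite_induct) (auto intro: net_approximable_zero net_approximable_add)

lemma net_approximable_uniform_limit:
  assumes "\<And>\<epsilon>. \<epsilon> > 0 \<Longrightarrow> \<exists>G. net_approximable \<sigma> S G \<and> (\<forall>x\<in>S. \<bar>G x - F x\<bar> < \<epsilon>)"
  shows "net_approximable \<sigma> S F"
  unfolding net_approximable_def
proof (intro allI impI)
  fix \<epsilon> :: real assume "\<epsilon> > 0"
  then obtain G where "net_approximable \<sigma> S G" and G: "\<forall>x\<in>S. \<bar>G x - F x\<bar> < \<epsilon>/2"
    using assms half_gt_zero by blast
  then obtain L where L: "\<forall>x\<in>S. \<bar>sigma_net \<sigma> L x - G x\<bar> < \<epsilon>/2"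
    using \<open>\<epsilon> > 0\<close> half_gt_zero unfolding net_approximable_def by blast
  have "\<bar>sigma_net \<sigma> L x - F x\<bar> < \<epsilon>" if "x \<in> S" for x
  proof -
    have "\<bar>sigma_net \<sigma> L x - F x\<bar> \<le> \<bar>sigma_net \<sigma> L x - G x\<bar> + \<bar>G x - F x\<bar>"
      using abs_triangle_ineq[of "sigma_net \<sigma> L x - G x" "G x - F x"] by simp
    also have "\<dots> < \<epsilon>"
      using add_strict_mono[OF L[rule_format, OF that] G[rule_format, OF that]] by simp
    finally show ?thesis .
  qed
  then show "\<exists>L. \<forall>x\<in>S. \<bar>sigma_net \<sigma> L x - F x\<bar> < \<epsilon>"
    by blast
qed

lemma net_approximable_ridge:
  assumes "net_approximable \<sigma> T g" "\<And>x. x \<in> S \<Longrightarrow> v \<bullet> x \<in> T"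
  shows "net_approximable \<sigma> S (\<lambda>x. g (v \<bullet> x))"
  unfolding net_approximable_def
proof (intro allI impI)
  fix \<epsilon> :: real assume "\<epsilon> > 0"
  then obtain L where "\<forall>t\<in>T. \<bar>sigma_net \<sigma> L t - g t\<bar> < \<epsilon>"
    using assms(1) unfolding net_approximable_def by blast
  with assms(2) show "\<exists>L. \<forall>x\<in>S. \<bar>sigma_net \<sigma> L x - g (v \<bullet> x)\<bar> < \<epsilon>"
    by (intro exI[of _ "map (\<lambda>(\<beta>, w, \<theta>). (\<beta>, w *\<^sub>R v, \<theta>)) L"]) (simp add: sigma_net_ridge)
qed

lemma abs_le_max_abs_endpoints: "t \<in> {a..b} \<Longrightarrow> \<bar>t\<bar> \<le> max \<bar>a\<bar> \<bar>b\<bar>"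
  for t :: real by auto

lemma abs_affine_le_max_abs_endpoints:
  fixes t :: real
  assumes "t \<in> {a..b}"
  shows "\<bar>w * t + \<theta>\<bar> \<le> \<bar>w\<bar> * max \<bar>a\<bar> \<bar>b\<bar> + \<bar>\<theta>\<bar>"
proof -
  have "\<bar>w * t + \<theta>\<bar> \<le> \<bar>w\<bar> * \<bar>t\<bar> + \<bar>\<theta>\<bar>"
    by (metis abs_mult abs_triangle_ineq)
  also have "\<dots> \<le> \<bar>w\<bar> * max \<bar>a\<bar> \<bar>b\<bar> + \<bar>\<theta>\<bar>"
    using abs_le_max_abs_endpoints[OF assms] by (simp add: mult_left_mono)
  finally show ?thesis .
qed

lemma net_approximable_power_mult_uniform_limit:
  fixes F :: "real \<Rightarrow> real"
  assumes "\<And>\<epsilon>. \<epsilon> > 0 \<Longrightarrow>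
    \<exists>G. net_approximable \<sigma> {a..b} (\<lambda>t. t ^ j * G t) \<and> (\<forall>t\<in>{a..b}. \<bar>G t - F t\<bar> < \<epsilon>)"
  shows "net_approximable \<sigma> {a..b} (\<lambda>t. t ^ j * F t)"
proof (rule net_approximable_uniform_limit)
  fix \<epsilon> :: real assume "\<epsilon> > 0"
  define K where "K = max \<bar>a\<bar> \<bar>b\<bar> ^ j"
  have "K \<ge> 0" by (simp add: K_def)
  with \<open>\<epsilon> > 0\<close> have "\<epsilon> / (K + 1) > 0" by simp
  then obtain G where G: "net_approximable \<sigma> {a..b} (\<lambda>t. t ^ j * G t)"
    "\<forall>t\<in>{a..b}. \<bar>G t - F t\<bar> < \<epsilon> / (K + 1)"
    using assms by blast
  have "\<bar>t ^ j * G t - t ^ j * F t\<bar> < \<epsilon>" if "t \<in> {a..b}" for t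
  proof -
    have "\<bar>t ^ j * G t - t ^ j * F t\<bar> = \<bar>t\<bar> ^ j * \<bar>G t - F t\<bar>"
      by (simp add: abs_mult power_abs flip: right_diff_distrib)
    also have "\<dots> \<le> K * (\<epsilon> / (K + 1))"
    proof (rule mult_mono)
      show "\<bar>t\<bar> ^ j \<le> K"
        unfolding K_def using abs_le_max_abs_endpoints[OF that] by (simp add: power_mono)
      show "\<bar>G t - F t\<bar> \<le> \<epsilon> / (K + 1)"
        using G(2) that by (simp add: less_imp_le)
    qed (use \<open>K \<ge> 0\<close> in auto)
    also have "\<dots> < \<epsilon>"
      using \<open>\<epsilon> > 0\<close> \<open>K \<ge> 0\<close> by (simp add: field_simps)
    finally show ?thesis .
  qed
  with G(1) show "\<exists>G. net_approximable \<sigma> {a..b} G \<and> (\<forall>t\<in>{a..b}. \<bar>G t - t ^ j * F t\<bar> < \<epsilon>)"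
    by blast
qed

lemma riemann_sum_antiderivative_error:
  fixes f \<Phi> :: "real \<Rightarrow> real" and M :: nat
  assumes deriv: "\<And>x. (\<Phi> has_real_derivative f x) (at x)" and "0 < M"
    and close: "\<And>u u'. u \<in> {y..y+1} \<Longrightarrow> u' \<in> {y..y+1} \<Longrightarrow> \<bar>u' - u\<bar> \<le> 1 / M \<Longrightarrow> \<bar>f u' - f u\<bar> \<le> \<epsilon>"
  shows "\<bar>(\<Sum>i<M. f (y + i / M)) / M - (\<Phi> (y + 1) - \<Phi> y)\<bar> \<le> \<epsilon>"
proof -
  define x where "x i = y + real i / M" for i
  have step: "x (Suc i) - x i = 1 / M" for i
    using \<open>0 < M\<close> by (simp add: x_def field_simps)
  have "\<exists>z. x i < z \<and> z < x (Suc i) \<and> \<Phi> (x (Suc i)) - \<Phi> (x i) = f z / M" for i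
  proof -
    have "0 < 1 / real M" using \<open>0 < M\<close> by simp
    with step[of i] have "x i < x (Suc i)" by linarith
    then obtain z where "x i < z" "z < x (Suc i)" "\<Phi> (x (Suc i)) - \<Phi> (x i) = (x (Suc i) - x i) * f z"
      using MVT2[of "x i" "x (Suc i)" \<Phi> f] deriv by blast
    then show ?thesis
      using step[of i] by auto
  qed
  then obtain z where z: "\<And>i. x i < z i \<and> z i < x (Suc i) \<and> \<Phi> (x (Suc i)) - \<Phi> (x i) = f (z i) / M"
    by metis
  have "\<Phi> (y + 1) - \<Phi> y = (\<Sum>i<M. \<Phi> (x (Suc i)) - \<Phi> (x i))"
    using \<open>0 < M\<close> by (subst sum_lessThan_telescope) (simp add: x_def)
  also have "\<dots> = (\<Sum>i<M. f (z i)) / M"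
    using z by (simp add: sum_divide_distrib)
  finally have "\<bar>(\<Sum>i<M. f (x i)) / M - (\<Phi> (y + 1) - \<Phi> y)\<bar> = \<bar>\<Sum>i<M. f (x i) - f (z i)\<bar> / M"
    by (simp add: sum_subtractf flip: diff_divide_distrib)
  also have "\<dots> \<le> (\<Sum>i<M. \<bar>f (z i) - f (x i)\<bar>) / M"
    by (intro divide_right_mono order_trans[OF sum_abs]) (simp_all add: abs_minus_commute)
  also have "\<dots> \<le> (\<Sum>i<M. \<epsilon>) / M"
  proof (intro divide_right_mono sum_mono close)
    fix i assume "i \<in> {..<M}"
    have "x (Suc i) \<le> y + 1" "y \<le> x i"
      using \<open>i \<in> {..<M}\<close> \<open>0 < M\<close> by (auto simp: x_def field_simps)
    then show "x i \<in> {y..y+1}" "z i \<in> {y..y+1}" "\<bar>z i - x i\<bar> \<le> 1 / M"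
      using z[of i] step[of i] by auto
  qed simp
  also have "\<dots> = \<epsilon>"
    using \<open>0 < M\<close> by simp
  finally show ?thesis by (simp add: x_def)
qed

definition power_ridge_approximable :: "(real \<Rightarrow> real) \<Rightarrow> nat \<Rightarrow> (real \<Rightarrow> real) \<Rightarrow> bool" where
  "power_ridge_approximable \<sigma> j g \<longleftrightarrow>
     (\<forall>w \<theta> a b. net_approximable \<sigma> {a..b} (\<lambda>t. t ^ j * g (w * t + \<theta>)))"

lemma power_ridge_approximable_activation: "power_ridge_approximable \<sigma> 0 (\<lambda>x. \<sigma> (r * x + c))"
  unfolding power_ridge_approximable_def
  using net_approximable_neuron[of \<sigma> _ 1 "r * _" "r * _ + c"]
  by (simp add: algebra_simps)

lemma continuous_on_UNIV_uniform_modulus: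
  fixes f :: "real \<Rightarrow> real"
  assumes "continuous_on UNIV f" "0 < \<epsilon>"
  obtains \<delta> where "0 < \<delta>" "\<And>x u. \<bar>x\<bar> \<le> R \<Longrightarrow> \<bar>u\<bar> < \<delta> \<Longrightarrow> \<bar>f (x + u) - f x\<bar> < \<epsilon>"
proof -
  have "uniformly_continuous_on {-(R+1)..R+1} f"
    by (rule compact_uniformly_continuous) (use assms(1) continuous_on_subset in auto)
  then obtain d where "0 < d" and d: "\<And>x x'. x \<in> {-(R+1)..R+1} \<Longrightarrow> x' \<in> {-(R+1)..R+1} \<Longrightarrow>
      \<bar>x' - x\<bar> < d \<Longrightarrow> \<bar>f x' - f x\<bar> < \<epsilon>"
    using assms(2) unfolding uniformly_continuous_on_def dist_real_def by metis
  have "\<bar>f (x + u) - f x\<bar> < \<epsilon>" if "\<bar>x\<bar> \<le> R" "\<bar>u\<bar> < min 1 d" for x u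
    using d[of x "x + u"] that by (auto simp: abs_le_iff abs_less_iff)
  with \<open>0 < d\<close> show thesis
    by (intro that[of "min 1 d"]) auto
qed

lemma difference_quotient_near_derivative:
  assumes deriv: "\<And>x. (g has_real_derivative g' x) (at x)"
    and near: "\<And>u. \<bar>u\<bar> < d \<Longrightarrow> \<bar>g' (y + u) - g' y\<bar> < \<epsilon>"
    and "0 < h" "t \<noteq> 0" "h * \<bar>t\<bar> < d"
  shows "\<bar>(g (y + h * t) - g y) / (h * t) - g' y\<bar> < \<epsilon>"
proof -
  have "((\<lambda>s. g (y + s * t)) has_real_derivative g' (y + s * t) * t) (at s)" for s
    by (rule DERIV_chain2[OF deriv]) (auto intro!: derivative_eq_intros)
  then have "\<exists>z. 0 < z \<and> z < h \<and> g (y + h * t) - g (y + 0 * t) = (h - 0) * (g' (y + z * t) * t)"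
    by (intro MVT2 \<open>0 < h\<close>)
  then obtain z where z: "0 < z" "z < h" "g (y + h * t) - g y = h * g' (y + z * t) * t"
    by auto
  have "\<bar>z * t\<bar> \<le> h * \<bar>t\<bar>"
    using z by (simp add: abs_mult mult_right_mono)
  then have "\<bar>g' (y + z * t) - g' y\<bar> < \<epsilon>"
    using near \<open>h * \<bar>t\<bar> < d\<close> by simp
  moreover have "(g (y + h * t) - g y) / (h * t) = g' (y + z * t)"
    using z(3) \<open>0 < h\<close> \<open>t \<noteq> 0\<close> by simp
  ultimately show ?thesis
    by simp
qed

lemma power_ridge_approximable_derivative:
  assumes deriv: "\<And>x. (g has_real_derivative g' x) (at x)" and cont: "continuous_on UNIV g'"
    and approx: "power_ridge_approximable \<sigma> j g"
  shows "power_ridge_approximable \<sigma> (Suc j) g'"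
  unfolding power_ridge_approximable_def
proof (intro allI net_approximable_power_mult_uniform_limit)
  fix w \<theta> a b \<epsilon> :: real assume "\<epsilon> > 0"
  define T where "T = max \<bar>a\<bar> \<bar>b\<bar>"
  obtain \<delta> where "0 < \<delta>"
    and near: "\<And>y u. \<bar>y\<bar> \<le> \<bar>w\<bar> * T + \<bar>\<theta>\<bar> \<Longrightarrow> \<bar>u\<bar> < \<delta> \<Longrightarrow> \<bar>g' (y + u) - g' y\<bar> < \<epsilon>"
    using continuous_on_UNIV_uniform_modulus[OF cont \<open>\<epsilon> > 0\<close>] by metis
  define h where "h = \<delta> / (T + 1)"
  have "T \<ge> 0"
    by (simp add: T_def)
  with \<open>0 < \<delta>\<close> have "0 < h" "h * T < \<delta>"
    by (simp_all add: h_def field_simps)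
  define G where "G t = (if t = 0 then g' \<theta> else (g ((w + h) * t + \<theta>) - g (w * t + \<theta>)) / (h * t))" for t
  have difference_quotient:
    "(\<lambda>t. t ^ Suc j * G t) = (\<lambda>t. 1 / h * (t ^ j * g ((w + h) * t + \<theta>)) - 1 / h * (t ^ j * g (w * t + \<theta>)))"
    using \<open>0 < h\<close> by (auto simp: G_def field_simps)
  have "net_approximable \<sigma> {a..b} (\<lambda>t. t ^ Suc j * G t)"
    unfolding difference_quotient using approx unfolding power_ridge_approximable_def
    by (intro net_approximable_diff net_approximable_cmult) auto
  moreover have "\<bar>G t - g' (w * t + \<theta>)\<bar> < \<epsilon>" if t: "t \<in> {a..b}" for t
  proof (cases "t = 0")
    case False
    have "h * \<bar>t\<bar> \<le> h * T"
      using abs_le_max_abs_endpoints[OF t] \<open>0 < h\<close> by (simp add: T_def)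
    with \<open>h * T < \<delta>\<close> have "h * \<bar>t\<bar> < \<delta>"
      by linarith
    then have "\<bar>(g (w * t + \<theta> + h * t) - g (w * t + \<theta>)) / (h * t) - g' (w * t + \<theta>)\<bar> < \<epsilon>"
      using near abs_affine_le_max_abs_endpoints[OF t] \<open>0 < h\<close> False
      by (intro difference_quotient_near_derivative[OF deriv]) (auto simp: T_def)
    with False show ?thesis
      by (simp add: G_def algebra_simps)
  qed (simp add: G_def \<open>\<epsilon> > 0\<close>)
  ultimately show "\<exists>G. net_approximable \<sigma> {a..b} (\<lambda>t. t ^ Suc j * G t) \<and>
      (\<forall>t\<in>{a..b}. \<bar>G t - g' (w * t + \<theta>)\<bar> < \<epsilon>)"
    by blast
qed

lemma power_ridge_approximable_antiderivative_difference:
  assumes cont: "continuous_on UNIV f" and deriv: "\<And>x. (\<Phi> has_real_derivative f x) (at x)"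
    and approx: "power_ridge_approximable \<sigma> j f"
  shows "power_ridge_approximable \<sigma> j (\<lambda>x. \<Phi> (x + 1) - \<Phi> x)"
  unfolding power_ridge_approximable_def
proof (intro allI net_approximable_power_mult_uniform_limit)
  fix w \<theta> a b \<epsilon> :: real assume "\<epsilon> > 0"
  define R where "R = \<bar>w\<bar> * max \<bar>a\<bar> \<bar>b\<bar> + \<bar>\<theta>\<bar>"
  obtain \<delta> where "0 < \<delta>"
    and near: "\<And>x u. \<bar>x\<bar> \<le> R + 1 \<Longrightarrow> \<bar>u\<bar> < \<delta> \<Longrightarrow> \<bar>f (x + u) - f x\<bar> < \<epsilon> / 2"
    using continuous_on_UNIV_uniform_modulus[OF cont, of "\<epsilon> / 2"] \<open>\<epsilon> > 0\<close> by (metis half_gt_zero)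
  obtain M :: nat where "1 / \<delta> < M"
    using reals_Archimedean2 by blast
  moreover have "0 < 1 / \<delta>"
    using \<open>0 < \<delta>\<close> by simp
  ultimately have "0 < M"
    by linarith
  with \<open>1 / \<delta> < M\<close> \<open>0 < \<delta>\<close> have "1 / M < \<delta>"
    by (simp add: field_simps)
  define G where "G t = (\<Sum>i<M. f (w * t + \<theta> + i / M)) / M" for t
  have riemann_sum: "(\<lambda>t. t ^ j * G t) = (\<lambda>t. \<Sum>i<M. 1 / M * (t ^ j * f (w * t + (\<theta> + i / M))))"
    by (simp add: G_def sum_distrib_left sum_divide_distrib add.assoc)
  have "net_approximable \<sigma> {a..b} (\<lambda>t. t ^ j * G t)"
    unfolding riemann_sum using approx unfolding power_ridge_approximable_def
    by (intro net_approximable_sum net_approximable_cmult) blast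
  moreover have "\<bar>G t - (\<Phi> (w * t + \<theta> + 1) - \<Phi> (w * t + \<theta>))\<bar> < \<epsilon>" if t: "t \<in> {a..b}" for t
  proof -
    define y where "y = w * t + \<theta>"
    have "\<bar>y\<bar> \<le> R"
      using abs_affine_le_max_abs_endpoints[OF t] by (simp add: y_def R_def)
    have "\<bar>f u' - f u\<bar> \<le> \<epsilon> / 2"
      if "u \<in> {y..y+1}" "u' \<in> {y..y+1}" "\<bar>u' - u\<bar> \<le> 1 / M" for u u'
      using near[of u "u' - u"] that \<open>\<bar>y\<bar> \<le> R\<close> \<open>1 / M < \<delta>\<close> by (auto simp: abs_le_iff)
    then have "\<bar>(\<Sum>i<M. f (y + i / M)) / M - (\<Phi> (y + 1) - \<Phi> y)\<bar> \<le> \<epsilon> / 2"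
      by (rule riemann_sum_antiderivative_error[OF deriv \<open>0 < M\<close>])
    then show ?thesis
      using \<open>\<epsilon> > 0\<close> by (simp add: G_def y_def)
  qed
  ultimately show "\<exists>G. net_approximable \<sigma> {a..b} (\<lambda>t. t ^ j * G t) \<and>
      (\<forall>t\<in>{a..b}. \<bar>G t - (\<Phi> (w * t + \<theta> + 1) - \<Phi> (w * t + \<theta>))\<bar> < \<epsilon>)"
    by blast
qed

lemma continuous_on_UNIV_has_antiderivative:
  fixes f :: "real \<Rightarrow> real"
  assumes "continuous_on UNIV f"
  obtains \<Phi> where "\<And>x. (\<Phi> has_real_derivative f x) (at x)"
proof
  fix x :: real
  have "((\<lambda>u. LBINT y=ereal 0..u. f y) has_vector_derivative f x) (at x within {-\<bar>x\<bar>-1..\<bar>x\<bar>+1})"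
    by (rule interval_integral_FTC2) (use assms continuous_on_subset in auto)
  then have "((\<lambda>u. LBINT y=ereal 0..u. f y) has_vector_derivative f x) (at x within {-\<bar>x\<bar>-1<..<\<bar>x\<bar>+1})"
    by (rule has_vector_derivative_within_subset) auto
  moreover have "at x within {-\<bar>x\<bar>-1<..<\<bar>x\<bar>+1} = at x"
    by (rule at_within_open) auto
  ultimately show "((\<lambda>u. LBINT y=ereal 0..u. f y) has_real_derivative f x) (at x)"
    by (simp add: has_real_derivative_iff_has_vector_derivative)
qed

lemma power_ridge_approximable_forward_difference:
  assumes cont: "continuous_on UNIV f" and approx: "power_ridge_approximable \<sigma> j f"
  shows "power_ridge_approximable \<sigma> (Suc j) (\<lambda>x. f (x + 1) - f x)"
proof -
  obtain \<Phi> where deriv: "\<And>x. (\<Phi> has_real_derivative f x) (at x)"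
    using continuous_on_UNIV_has_antiderivative[OF cont] by blast
  have "((\<lambda>x. \<Phi> (x + 1)) has_real_derivative f (x + 1) * 1) (at x)" for x
    by (rule DERIV_chain2[OF deriv]) (auto intro!: derivative_eq_intros)
  then have "((\<lambda>x. \<Phi> (x + 1) - \<Phi> x) has_real_derivative f (x + 1) - f x) (at x)" for x
    using deriv[of x] by (auto intro!: derivative_eq_intros)
  moreover have "continuous_on UNIV (\<lambda>x. f (x + 1) - f x)"
    by (intro continuous_intros continuous_on_compose2[OF cont]) auto
  ultimately show ?thesis
    using power_ridge_approximable_antiderivative_difference[OF cont deriv approx]
    by (rule power_ridge_approximable_derivative)
qed

primrec forward_diff :: "(real \<Rightarrow> real) \<Rightarrow> nat \<Rightarrow> real \<Rightarrow> real" where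
  "forward_diff f 0 = f"
| "forward_diff f (Suc k) = (\<lambda>x. forward_diff f k (x + 1) - forward_diff f k x)"

text \<open>The signed binomial coefficients \<open>(-1)\<^sup>k\<^sup>-\<^sup>j (k choose j)\<close>.\<close>
primrec forward_diff_coeff :: "nat \<Rightarrow> nat \<Rightarrow> real" where
  "forward_diff_coeff 0 j = (if j = 0 then 1 else 0)"
| "forward_diff_coeff (Suc k) j = (if j = 0 then 0 else forward_diff_coeff k (j - 1)) - forward_diff_coeff k j"

lemma forward_diff_coeff_eq_0: "k < j \<Longrightarrow> forward_diff_coeff k j = 0"
  by (induction k arbitrary: j) auto

lemma forward_diff_coeff_diag [simp]: "forward_diff_coeff k k = 1"
  by (induction k) (auto simp: forward_diff_coeff_eq_0)

lemma forward_diff_eq_sum: "forward_diff f k x = (\<Sum>j\<le>k. forward_diff_coeff k j * f (x + j))"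
proof (induction k arbitrary: x)
  case 0
  then show ?case by simp
next
  case (Suc k)
  have "(\<Sum>j\<le>Suc k. forward_diff_coeff (Suc k) j * f (x + j)) =
      (\<Sum>j\<le>Suc k. (if j = 0 then 0 else forward_diff_coeff k (j - 1)) * f (x + j)) -
      (\<Sum>j\<le>Suc k. forward_diff_coeff k j * f (x + j))"
    by (simp add: left_diff_distrib sum_subtractf)
  also have "(\<Sum>j\<le>Suc k. (if j = 0 then 0 else forward_diff_coeff k (j - 1)) * f (x + j)) =
      (\<Sum>j\<le>k. forward_diff_coeff k j * f (x + 1 + j))"
    by (subst sum.atMost_Suc_shift) (simp add: add_ac)
  also have "(\<Sum>j\<le>Suc k. forward_diff_coeff k j * f (x + j)) = (\<Sum>j\<le>k. forward_diff_coeff k j * f (x + j))"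
    by (simp add: forward_diff_coeff_eq_0)
  finally show ?case
    using Suc.IH by simp
qed

lemma continuous_on_forward_diff: "continuous_on UNIV f \<Longrightarrow> continuous_on UNIV (forward_diff f k)"
proof (induction k)
  case (Suc k)
  then show ?case
    by (simp, intro continuous_intros continuous_on_compose2[OF Suc.IH]) auto
qed simp

lemma power_ridge_approximable_forward_diff:
  assumes "continuous_on UNIV f" "power_ridge_approximable \<sigma> 0 f"
  shows "power_ridge_approximable \<sigma> k (forward_diff f k)"
  by (induction k) (simp_all add: assms power_ridge_approximable_forward_difference continuous_on_forward_diff)

lemma net_approximable_power:
  fixes a b :: real
  assumes cont: "continuous_on UNIV \<sigma>" and nonzero: "forward_diff (\<lambda>x. \<sigma> (r * x + c)) k \<theta> \<noteq> 0"
  shows "net_approximable \<sigma> {a..b} (\<lambda>t. t ^ k)"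
proof -
  have "continuous_on UNIV (\<lambda>x. \<sigma> (r * x + c))"
    by (intro continuous_on_compose2[OF cont] continuous_intros) auto
  then have "power_ridge_approximable \<sigma> k (forward_diff (\<lambda>x. \<sigma> (r * x + c)) k)"
    by (intro power_ridge_approximable_forward_diff power_ridge_approximable_activation)
  then have "net_approximable \<sigma> {a..b} (\<lambda>t. 1 / forward_diff (\<lambda>x. \<sigma> (r * x + c)) k \<theta> *
      (t ^ k * forward_diff (\<lambda>x. \<sigma> (r * x + c)) k (0 * t + \<theta>)))"
    unfolding power_ridge_approximable_def by (intro net_approximable_cmult) blast
  then show ?thesis
    using nonzero by simp
qed

lemma net_approximable_interval:
  fixes g :: "real \<Rightarrow> real"
  assumes cont: "continuous_on UNIV \<sigma>"
    and nonzero: "\<And>k. \<exists>r c \<theta>. forward_diff (\<lambda>x. \<sigma> (r * x + c)) k \<theta> \<noteq> 0"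
    and g: "continuous_on {a..b} g"
  shows "net_approximable \<sigma> {a..b} g"
proof (rule net_approximable_uniform_limit)
  fix \<epsilon> :: real assume "\<epsilon> > 0"
  obtain p where p: "real_polynomial_function p" "\<And>x. x \<in> {a..b} \<Longrightarrow> \<bar>g x - p x\<bar> < \<epsilon>"
    using Stone_Weierstrass_real_polynomial_function[OF compact_Icc g \<open>\<epsilon> > 0\<close>] by blast
  obtain c n where p_eq: "p = (\<lambda>x. \<Sum>i\<le>n. c i * x ^ i)"
    using p(1) real_polynomial_function_iff_sum by blast
  have "net_approximable \<sigma> {a..b} (\<lambda>t. t ^ i)" for i
    using nonzero[of i] net_approximable_power[OF cont] by blast
  then have "net_approximable \<sigma> {a..b} p"
    unfolding p_eq by (intro net_approximable_sum net_approximable_cmult)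
  then show "\<exists>G. net_approximable \<sigma> {a..b} G \<and> (\<forall>t\<in>{a..b}. \<bar>G t - g t\<bar> < \<epsilon>)"
    using p(2) by (auto simp: abs_minus_commute)
qed

inductive exp_sum :: "('a::real_inner \<Rightarrow> real) \<Rightarrow> bool" where
  exp_sum_exp: "exp_sum (\<lambda>x. c * exp (v \<bullet> x))"
| exp_sum_add: "exp_sum f \<Longrightarrow> exp_sum g \<Longrightarrow> exp_sum (\<lambda>x. f x + g x)"

lemma exp_sum_const: "exp_sum (\<lambda>x. c)"
  using exp_sum_exp[of c 0] by simp

lemma exp_sum_mult_exp:
  assumes "exp_sum g"
  shows "exp_sum (\<lambda>x. c * exp (v \<bullet> x) * g x)"
  using assms
proof induction
  case (exp_sum_exp d u)
  then show ?case
    using exp_sum.exp_sum_exp[of "c * d" "v + u"] by (simp add: inner_add_left exp_add algebra_simps)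
next
  case (exp_sum_add g1 g2)
  then show ?case
    using exp_sum.exp_sum_add by (simp add: distrib_left)
qed

lemma exp_sum_mult:
  assumes "exp_sum f" "exp_sum g"
  shows "exp_sum (\<lambda>x. f x * g x)"
  using assms(1)
proof induction
  case (exp_sum_exp c v)
  then show ?case
    using exp_sum_mult_exp[OF assms(2)] by simp
next
  case (exp_sum_add f1 f2)
  then show ?case
    using exp_sum.exp_sum_add by (simp add: distrib_right)
qed

lemma continuous_on_exp_sum: "exp_sum f \<Longrightarrow> continuous_on S f"
  by (induction rule: exp_sum.induct) (auto intro!: continuous_intros)

lemma net_approximable_ridge_function:
  fixes S :: "'a::real_inner set"
  assumes g: "\<And>a b. net_approximable \<sigma> {a..b} g" and "bounded S"
  shows "net_approximable \<sigma> S (\<lambda>x. g (v \<bullet> x))"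
proof -
  obtain B where B: "\<And>x. x \<in> S \<Longrightarrow> norm x \<le> B"
    using \<open>bounded S\<close> unfolding bounded_iff by blast
  have "v \<bullet> x \<in> {-(norm v * B)..norm v * B}" if "x \<in> S" for x
  proof -
    have "\<bar>v \<bullet> x\<bar> \<le> norm v * norm x"
      by (rule Cauchy_Schwarz_ineq2)
    also have "\<dots> \<le> norm v * B"
      using B[OF that] by (simp add: mult_left_mono)
    finally show ?thesis
      by (simp add: abs_le_iff)
  qed
  then show ?thesis
    by (rule net_approximable_ridge[OF g])
qed

lemma net_approximable_exp_sum:
  assumes univariate: "\<And>a b g. continuous_on {a..b} g \<Longrightarrow> net_approximable \<sigma> {a..b} (g :: real \<Rightarrow> real)"
    and "bounded S" and "exp_sum f"
  shows "net_approximable \<sigma> S f"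
  using \<open>exp_sum f\<close>
proof induction
  case (exp_sum_exp c v)
  have "net_approximable \<sigma> S (\<lambda>x. exp (v \<bullet> x))"
    by (intro net_approximable_ridge_function univariate continuous_intros \<open>bounded S\<close>)
  then show ?case
    by (rule net_approximable_cmult)
qed (rule net_approximable_add)

lemma net_approximable_compact:
  fixes S :: "'a::euclidean_space set"
  assumes univariate: "\<And>a b g. continuous_on {a..b} g \<Longrightarrow> net_approximable \<sigma> {a..b} (g :: real \<Rightarrow> real)"
    and "compact S" and f: "continuous_on S f"
  shows "net_approximable \<sigma> S f"
proof (rule net_approximable_uniform_limit)
  fix \<epsilon> :: real assume "\<epsilon> > 0"
  have "\<exists>g. exp_sum g \<and> (\<forall>x\<in>S. \<bar>f x - g x\<bar> < \<epsilon>)"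
  proof (rule Stone_Weierstrass_HOL[where P = exp_sum, OF \<open>compact S\<close> exp_sum_const continuous_on_exp_sum])
    show "\<exists>g. exp_sum g \<and> g x \<noteq> g y" if xy: "x \<in> S \<and> y \<in> S \<and> x \<noteq> y" for x y
    proof -
      obtain b where "b \<in> Basis" "b \<bullet> x \<noteq> b \<bullet> y"
        using xy euclidean_eqI[of x y] by (metis inner_commute)
      then show ?thesis
        using exp_sum_exp[of 1 b] by (intro exI[of _ "\<lambda>z. 1 * exp (b \<bullet> z)"]) simp
    qed
  qed (simp_all add: exp_sum_add exp_sum_mult f \<open>\<epsilon> > 0\<close>)
  then obtain g where "exp_sum g" "\<forall>x\<in>S. \<bar>f x - g x\<bar> < \<epsilon>"
    by blast
  moreover have "net_approximable \<sigma> S g"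
    using net_approximable_exp_sum[OF univariate compact_imp_bounded[OF \<open>compact S\<close>] \<open>exp_sum g\<close>] .
  ultimately show "\<exists>G. net_approximable \<sigma> S G \<and> (\<forall>x\<in>S. \<bar>G x - f x\<bar> < \<epsilon>)"
    by (auto simp: abs_minus_commute)
qed

lemma unit_cube_eq_cbox: "unit_cube = cbox (0::real^'n) 1"
  unfolding unit_cube_def by (auto simp: mem_box_cart)

lemma compact_unit_cube: "compact (unit_cube :: (real^'n) set)"
  unfolding unit_cube_eq_cbox by (rule compact_cbox)

lemma sets_restrict_unit_cube_singleton:
  "x \<in> unit_cube \<Longrightarrow> {x} \<in> sets (restrict_space borel (unit_cube :: (real^'n) set))"
  unfolding unit_cube_eq_cbox by (subst sets_restrict_space_iff) auto

definition point_masses :: "'i set \<Rightarrow> ('i \<Rightarrow> real) \<Rightarrow> ('i \<Rightarrow> real^'n) \<Rightarrow> (real^'n) measure" where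
  "point_masses I p X = distr (point_measure I (\<lambda>i. ennreal (p i))) (restrict_space borel unit_cube) X"

lemma measurable_point_masses:
  "X ` I \<subseteq> unit_cube \<Longrightarrow> X \<in> point_measure I (\<lambda>i. ennreal (p i)) \<rightarrow>\<^sub>M restrict_space borel unit_cube"
  by (auto simp: space_restrict_space space_point_measure)

lemma sets_point_masses [simp]: "sets (point_masses I p X) = sets (restrict_space borel unit_cube)"
  by (simp add: point_masses_def)

lemma finite_measure_point_masses:
  assumes "finite I" "X ` I \<subseteq> unit_cube"
  shows "finite_measure (point_masses I p X)"
  unfolding point_masses_def
proof (rule finite_measure.finite_measure_distr[OF _ measurable_point_masses[OF assms(2)]])
  show "finite_measure (point_measure I (\<lambda>i. ennreal (p i)))"
    using assms(1) by (intro finite_measureI) (simp add: emeasure_point_measure_finite space_point_measure)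
qed

lemma integral_point_masses:
  assumes "finite I" "X ` I \<subseteq> unit_cube" "\<And>i. 0 \<le> p i" "continuous_on UNIV g"
  shows "(\<integral>x. g x \<partial>point_masses I p X) = (\<Sum>i\<in>I. p i * g (X i))"
proof -
  have "g \<in> borel_measurable (restrict_space borel unit_cube)"
    by (intro measurable_restrict_space1 borel_measurable_continuous_onI assms(4))
  then have "(\<integral>x. g x \<partial>point_masses I p X) = (\<integral>i. g (X i) \<partial>point_measure I (\<lambda>i. ennreal (p i)))"
    unfolding point_masses_def by (rule integral_distr[OF measurable_point_masses[OF assms(2)]])
  also have "\<dots> = (\<Sum>i\<in>I. p i * g (X i))"
    using assms(1,3) by (subst lebesgue_integral_point_measure_finite) auto
  finally show ?thesis .
qed

lemma measure_point_masses_singleton: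
  assumes "finite I" "X ` I \<subseteq> unit_cube" "\<And>i. 0 \<le> p i" "inj_on X I" "i \<in> I"
  shows "measure (point_masses I p X) {X i} = p i"
proof -
  have "X i \<in> unit_cube"
    using assms(2,5) by auto
  have "X -` {X i} \<inter> space (point_measure I (\<lambda>i. ennreal (p i))) = {i}"
    using assms(4,5) by (auto simp: inj_on_def space_point_measure)
  then show ?thesis
    unfolding point_masses_def measure_distr[OF measurable_point_masses[OF assms(2)]
        sets_restrict_unit_cube_singleton[OF \<open>X i \<in> unit_cube\<close>]]
    using assms(1,3,5) by (subst measure_point_measure_finite_if) auto
qed

lemma discriminatory_point_masses_coeff_eq_0:
  fixes X :: "'i \<Rightarrow> real^'n"
  assumes disc: "discriminatory \<sigma> TYPE('n)" and cont: "continuous_on UNIV \<sigma>"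
    and "finite I" "X ` I \<subseteq> unit_cube" "inj_on X I"
    and vanish: "\<And>w \<theta>. (\<Sum>i\<in>I. c i * \<sigma> (w \<bullet> X i + \<theta>)) = 0"
    and "i \<in> I"
  shows "c i = 0"
proof -
  define M1 where "M1 = point_masses I (\<lambda>i. max (c i) 0) X"
  define M2 where "M2 = point_masses I (\<lambda>i. max (- c i) 0) X"
  have "(\<integral>x. \<sigma> (w \<bullet> x + \<theta>) \<partial>M1) = (\<integral>x. \<sigma> (w \<bullet> x + \<theta>) \<partial>M2)" for w \<theta>
  proof -
    have "continuous_on UNIV (\<lambda>x::real^'n. \<sigma> (w \<bullet> x + \<theta>))"
      by (intro continuous_on_compose2[OF cont] continuous_intros) auto
    then have "(\<integral>x. \<sigma> (w \<bullet> x + \<theta>) \<partial>M1) - (\<integral>x. \<sigma> (w \<bullet> x + \<theta>) \<partial>M2) =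
        (\<Sum>i\<in>I. (max (c i) 0 - max (- c i) 0) * \<sigma> (w \<bullet> X i + \<theta>))"
      using assms(3,4) unfolding M1_def M2_def
      by (simp add: integral_point_masses flip: sum_subtractf left_diff_distrib)
    also have "\<dots> = (\<Sum>i\<in>I. c i * \<sigma> (w \<bullet> X i + \<theta>))"
      by (intro sum.cong refl) (simp add: max_def)
    finally show ?thesis
      using vanish by simp
  qed
  then have "\<forall>S \<in> sets M1. measure M1 S = measure M2 S"
    using disc assms(3,4) unfolding discriminatory_def M1_def M2_def
    by (simp add: finite_measure_point_masses)
  moreover have "{X i} \<in> sets M1"
    using assms(4,7) by (auto simp: M1_def intro: sets_restrict_unit_cube_singleton)
  ultimately have "measure M1 {X i} = measure M2 {X i}"
    by blast
  then have "max (c i) 0 = max (- c i) 0"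
    unfolding M1_def M2_def using assms(3-5,7) by (simp add: measure_point_masses_singleton)
  then show ?thesis
    by linarith
qed

lemma discriminatory_forward_diff_nonzero:
  assumes disc: "discriminatory \<sigma> TYPE('n::finite)" and cont: "continuous_on UNIV \<sigma>"
  shows "\<exists>r c \<theta>. forward_diff (\<lambda>x. \<sigma> (r * x + c)) k \<theta> \<noteq> 0"
proof (rule ccontr)
  assume "\<not> ?thesis"
  then have vanish: "(\<Sum>j\<le>k. forward_diff_coeff k j * \<sigma> (r * j + c)) = 0" for r c :: real
    using forward_diff_eq_sum[of "\<lambda>x. \<sigma> (r * x + c)" k 0] by auto
  define X :: "nat \<Rightarrow> real^'n" where "X j = (\<chi> i. j / Suc k)" for j
  have "X ` {..k} \<subseteq> unit_cube"
    unfolding X_def unit_cube_def by auto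
  moreover have "inj_on X {..k}"
    by (rule inj_onI) (simp add: X_def vec_eq_iff)
  moreover have "(\<Sum>j\<le>k. forward_diff_coeff k j * \<sigma> (w \<bullet> X j + \<theta>)) = 0" for w \<theta>
  proof -
    define s where "s = (\<Sum>i\<in>UNIV. w $ i) / Suc k"
    have "w \<bullet> X j = s * j" for j
      unfolding X_def s_def inner_vec_def by (simp add: sum_divide_distrib sum_distrib_right)
    then show ?thesis
      using vanish[of s \<theta>] by simp
  qed
  ultimately have "forward_diff_coeff k k = 0"
    by (intro discriminatory_point_masses_coeff_eq_0[OF disc cont, of "{..k}" X "forward_diff_coeff k" k]) auto
  then show False
    by simp
qed

theorem discriminatory_net_approximable_unit_cube:
  fixes f :: "real^'n \<Rightarrow> real"
  assumes "discriminatory \<sigma> TYPE('n)" "continuous_on UNIV \<sigma>" "continuous_on unit_cube f"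
  shows "net_approximable \<sigma> unit_cube f"
  using net_approximable_interval[OF assms(2) discriminatory_forward_diff_nonzero[OF assms(1,2)]]
  by (rule net_approximable_compact[OF _ compact_unit_cube assms(3)])

lemma cnj_mem_eigenvalues:
  fixes B :: "real^'n^'n"
  assumes "e \<in> eigenvalues B"
  shows "cnj e \<in> eigenvalues B"
proof -
  obtain v :: "complex^'n" where "v \<noteq> 0" and v: "cmat B *v v = e *s v"
    using assms unfolding eigenvalues_def by blast
  define v' :: "complex^'n" where "v' = (\<chi> i. cnj (v $ i))"
  have "v' \<noteq> 0"
    using \<open>v \<noteq> 0\<close> by (auto simp: v'_def vec_eq_iff)
  moreover have "cmat B *v v' = cnj e *s v'"
  proof -
    have "(\<Sum>j\<in>UNIV. complex_of_real (B $ i $ j) * v $ j) = e * v $ i" for i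
      using v by (auto simp: vec_eq_iff matrix_vector_mult_def cmat_def)
    then have "cnj (\<Sum>j\<in>UNIV. complex_of_real (B $ i $ j) * v $ j) = cnj (e * v $ i)" for i
      by simp
    then have "(\<Sum>j\<in>UNIV. complex_of_real (B $ i $ j) * cnj (v $ j)) = cnj e * cnj (v $ i)" for i
      by (simp add: cnj_sum)
    then show ?thesis
      by (simp add: vec_eq_iff matrix_vector_mult_def cmat_def v'_def)
  qed
  ultimately show ?thesis
    unfolding eigenvalues_def by blast
qed

lemma real_eigenvector_of_real_eigenvalue:
  fixes B :: "real^'n^'n"
  assumes "e \<in> eigenvalues B" "Im e = 0"
  shows "\<exists>y. y \<noteq> 0 \<and> B *v y = Re e *s y"
proof -
  obtain v :: "complex^'n" where "v \<noteq> 0" and v: "cmat B *v v = e *s v"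
    using assms(1) unfolding eigenvalues_def by blast
  have components: "(\<Sum>j\<in>UNIV. complex_of_real (B $ i $ j) * v $ j) = e * v $ i" for i
    using v by (auto simp: vec_eq_iff matrix_vector_mult_def cmat_def)
  define yr :: "real^'n" where "yr = (\<chi> i. Re (v $ i))"
  define yi :: "real^'n" where "yi = (\<chi> i. Im (v $ i))"
  have "(\<Sum>j\<in>UNIV. B $ i $ j * Re (v $ j)) = Re e * Re (v $ i)" for i
    using arg_cong[OF components[of i], of Re] assms(2) by (simp add: Re_sum)
  then have "B *v yr = Re e *s yr"
    by (simp add: vec_eq_iff matrix_vector_mult_def yr_def)
  moreover have "(\<Sum>j\<in>UNIV. B $ i $ j * Im (v $ j)) = Re e * Im (v $ i)" for i
    using arg_cong[OF components[of i], of Im] assms(2) by (simp add: Im_sum)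
  then have "B *v yi = Re e *s yi"
    by (simp add: vec_eq_iff matrix_vector_mult_def yi_def)
  moreover have "yr \<noteq> 0 \<or> yi \<noteq> 0"
    using \<open>v \<noteq> 0\<close> by (auto simp: yr_def yi_def vec_eq_iff complex_eq_iff)
  ultimately show ?thesis
    by blast
qed

text \<open>Non-real eigenvalues of a real matrix come in conjugate pairs of equal modulus.\<close>
lemma distinct_abs_eigenvalues_real_eigenvector:
  fixes B :: "real^'n^'n"
  assumes "distinct_abs_eigenvalues B"
  shows "\<exists>\<mu> y. y \<noteq> 0 \<and> B *v y = \<mu> *s y"
proof -
  have "eigenvalues B \<noteq> {}"
    using assms unfolding distinct_abs_eigenvalues_def by auto
  then obtain e where e: "e \<in> eigenvalues B"
    by blast
  have "cmod (cnj e) = cmod e"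
    by simp
  then have "cnj e = e"
    using assms cnj_mem_eigenvalues[OF e] e unfolding distinct_abs_eigenvalues_def inj_on_def by blast
  then have "Im e = 0"
    by (metis Reals_cnj_iff complex_is_Real_iff)
  then show ?thesis
    using real_eigenvector_of_real_eigenvalue[OF e] by blast
qed

lemma left_eigenvector_exists:
  fixes B :: "real^'n^'n"
  assumes "y \<noteq> 0" "B *v y = \<mu> *s y"
  shows "\<exists>h. h \<noteq> 0 \<and> h v* B = \<mu> *s h"
proof -
  define C where "C = B - \<mu> *\<^sub>R mat 1"
  have "(\<mu> *\<^sub>R mat 1) *v y = \<mu> *s y"
    by (metis matrix_vector_mul_lid scaleR_matrix_vector_assoc scalar_mult_eq_scaleR)
  with assms(2) have "C *v y = 0"
    by (simp add: C_def matrix_vector_mult_diff_rdistrib)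
  then have "\<not> invertible C"
    using assms(1) by (metis invertible_left_inverse matrix_left_invertible_ker)
  then have "\<not> invertible (transpose C)"
    by (metis transpose_invertible transpose_transpose)
  then obtain h where "h \<noteq> 0" "transpose C *v h = 0"
    by (metis invertible_left_inverse matrix_left_invertible_ker)
  then have "h v* C = 0"
    by simp
  moreover have "h v* (\<mu> *\<^sub>R mat 1) = \<mu> *s h"
    by (metis vector_matrix_mul_rid vector_scaleR_matrix_ac scalar_mult_eq_scaleR)
  moreover have "h v* C = h v* B - h v* (\<mu> *\<^sub>R mat 1)"
    by (simp add: C_def vector_matrix_mult_def vec_eq_iff sum_subtractf right_diff_distrib)
  ultimately show ?thesis
    using \<open>h \<noteq> 0\<close> by auto
qed

lemma stein_displacement_outer_left_eigenvector:
  assumes "h v* B = \<mu> *s h"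
  shows "outer z h - A ** outer z h ** B = outer (z - \<mu> *s (A *v z)) h"
proof -
  have hB: "(\<Sum>k\<in>UNIV. h $ k * B $ k $ c) = \<mu> * h $ c" for c
    using assms unfolding vec_eq_iff vector_matrix_mult_def by (auto simp: mult.commute)
  have "A ** outer z h = outer (A *v z) h"
    unfolding outer_def
    by (simp add: vec_eq_iff matrix_matrix_mult_def matrix_vector_mult_def sum_distrib_right mult.assoc)
  moreover have "outer (A *v z) h ** B = outer (A *v z) (\<mu> *s h)"
    unfolding outer_def
    by (simp add: vec_eq_iff matrix_matrix_mult_def mult.assoc flip: sum_distrib_left hB)
  ultimately have "A ** outer z h ** B = outer (A *v z) (\<mu> *s h)"
    by simp
  then show ?thesis
    by (simp add: outer_def vec_eq_iff algebra_simps)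
qed

lemma column_outer: "column c (outer z h) = h $ c *s z"
  by (simp add: outer_def column_def vec_eq_iff mult.commute)

lemma rank_one_displacement_prescribed_column:
  fixes A B :: "real^'n^'n"
  assumes "distinct_abs_eigenvalues B"
  obtains c0 where "\<And>u. \<exists>W. (\<exists>g h. W - A ** W ** B = outer g h) \<and> column c0 W = u"
proof -
  obtain \<mu> y where "y \<noteq> 0" "B *v y = \<mu> *s y"
    using distinct_abs_eigenvalues_real_eigenvector[OF assms] by blast
  then obtain h where "h \<noteq> 0" and h: "h v* B = \<mu> *s h"
    using left_eigenvector_exists by blast
  then obtain c0 where "h $ c0 \<noteq> 0"
    by (auto simp: vec_eq_iff)
  have "\<exists>W. (\<exists>g h. W - A ** W ** B = outer g h) \<and> column c0 W = u" for u
    using stein_displacement_outer_left_eigenvector[OF h, of "(1 / h $ c0) *s u" A] \<open>h $ c0 \<noteq> 0\<close>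
    by (intro exI[of _ "outer ((1 / h $ c0) *s u) h"]) (auto simp: column_outer)
  then show ?thesis
    using that by blast
qed

lemma sigma_net_block_form:
  fixes L :: "(real \<times> (real^'n::finite) \<times> real) list"
  assumes "\<And>u. \<exists>W. P W \<and> column c0 W = u"
  obtains k :: nat and W :: "nat \<Rightarrow> real^'n^'n" and \<alpha> \<theta> :: "nat \<Rightarrow> 'n \<Rightarrow> real"
  where "0 < k" "\<And>i. i < k \<Longrightarrow> P (W i)"
    "\<And>x. (\<Sum>i<k. \<Sum>c\<in>UNIV. \<alpha> i c * \<sigma> (column c (W i) \<bullet> x + \<theta> i c)) = sigma_net \<sigma> L x"
proof -
  obtain V where V: "\<And>u. P (V u) \<and> column c0 (V u) = u"
    using assms by metis
  \<comment> \<open>A dummy zero neuron makes \<open>k > 0\<close> even for the empty network.\<close>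
  define L' where "L' = L @ [(0, 0, 0)]"
  define W where "W i = V (fst (snd (L' ! i)))" for i
  define \<alpha> where "\<alpha> i c = (if c = c0 then fst (L' ! i) else 0)" for i c
  define \<theta> where "\<theta> i (c::'n) = snd (snd (L' ! i))" for i c
  have "\<alpha> i c * \<sigma> (column c (W i) \<bullet> x + \<theta> i c) =
      (if c = c0 then (case L' ! i of (\<beta>, w, t) \<Rightarrow> \<beta> * \<sigma> (w \<bullet> x + t)) else 0)" for i x c
    by (simp add: \<alpha>_def \<theta>_def W_def V case_prod_beta)
  then have "(\<Sum>c\<in>UNIV. \<alpha> i c * \<sigma> (column c (W i) \<bullet> x + \<theta> i c)) =
      (case L' ! i of (\<beta>, w, t) \<Rightarrow> \<beta> * \<sigma> (w \<bullet> x + t))" for i x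
    by simp
  then have "(\<Sum>i<length L'. \<Sum>c\<in>UNIV. \<alpha> i c * \<sigma> (column c (W i) \<bullet> x + \<theta> i c)) = sigma_net \<sigma> L' x" for x
    unfolding sigma_net_def sum_list_sum_nth by (intro sum.cong) (auto simp: atLeast0LessThan)
  also have "sigma_net \<sigma> L' x = sigma_net \<sigma> L x" for x
    by (simp add: L'_def sigma_net_def)
  moreover have "P (W i)" for i
    by (simp add: W_def V)
  ultimately show ?thesis
    using that[of "length L'" W \<alpha> \<theta>] by (simp add: L'_def)
qed

theorem theorem2:
  fixes \<sigma> :: "real \<Rightarrow> real"
    and A B :: "real^'n^'n"
    and q :: nat and a :: real
  assumes "continuous_on UNIV \<sigma>"
    and "discriminatory \<sigma> TYPE('n)"
    and "invertible A" and "invertible B"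
    and "diagonalizable A" and "diagonalizable B"
    and "0 < q" and "q \<le> CARD('n)" and "a \<noteq> 0"
    and "mat_pow A q = a *\<^sub>R mat 1"
    and "invertible (mat 1 - a *\<^sub>R mat_pow B q)"
    and "distinct_abs_eigenvalues B"
  shows "\<forall>f :: real^'n \<Rightarrow> real. continuous_on unit_cube f \<longrightarrow>
     (\<forall>\<epsilon>>0. \<exists>(k::nat) (W :: nat \<Rightarrow> real^'n^'n) (\<alpha> :: nat \<Rightarrow> 'n \<Rightarrow> real) (\<theta> :: nat \<Rightarrow> 'n \<Rightarrow> real).
        0 < k \<and>
        (\<forall>i<k. \<exists>g h. W i - A ** W i ** B = outer g h) \<and>
        (\<forall>x\<in>unit_cube.
           \<bar>(\<Sum>i<k. \<Sum>c\<in>UNIV. \<alpha> i c * \<sigma> (column c (W i) \<bullet> x + \<theta> i c)) - f x\<bar> < \<epsilon>))"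
proof (intro allI impI)
  \<comment> \<open>Only hypothesis (iii) on \<open>B\<close> is needed; the displacement-rank condition is met by rank-one blocks.\<close>
  fix f :: "real^'n \<Rightarrow> real" and \<epsilon> :: real
  assume "continuous_on unit_cube f" "\<epsilon> > 0"
  then obtain L where L: "\<forall>x\<in>unit_cube. \<bar>sigma_net \<sigma> L x - f x\<bar> < \<epsilon>"
    using discriminatory_net_approximable_unit_cube[OF assms(2,1)] unfolding net_approximable_def by blast
  obtain c0 where c0: "\<And>u. \<exists>W. (\<exists>g h. W - A ** W ** B = outer g h) \<and> column c0 W = u"
    using rank_one_displacement_prescribed_column[OF assms(12)] by blast
  obtain k :: nat and W \<alpha> \<theta> where "0 < k" "\<And>i. i < k \<Longrightarrow> \<exists>g h. W i - A ** W i ** B = outer g h"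
    "\<And>x. (\<Sum>i<k. \<Sum>c\<in>UNIV. \<alpha> i c * \<sigma> (column c (W i) \<bullet> x + \<theta> i c)) = sigma_net \<sigma> L x"
    using sigma_net_block_form[OF c0, of \<sigma> L] by blast
  with L show "\<exists>(k::nat) W \<alpha> \<theta>. 0 < k \<and> (\<forall>i<k. \<exists>g h. W i - A ** W i ** B = outer g h) \<and>
      (\<forall>x\<in>unit_cube. \<bar>(\<Sum>i<k. \<Sum>c\<in>UNIV. \<alpha> i c * \<sigma> (column c (W i) \<bullet> x + \<theta> i c)) - f x\<bar> < \<epsilon>)"
    by (intro exI[of _ k] exI[of _ W] exI[of _ \<alpha>] exI[of _ \<theta>]) auto
qed

end
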